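(* Let $\mathcal{T}$ be a single-elimination tournament and $\mathcal{B}$ a set of brackets of $\mathcal{T}$. If there exist two distinct players $a,b$ such that $B_i(x_{a,b})\notin\{a,b\}$ for every $B_i\in\mathcal{B}$, then $\mathcal{B}$ is not $\sigma$-resolving for any scoring system $\sigma$.
   Context: A single-elimination tournament is a finite directed graph $\mathcal{T}$ such that: (a) $\mathcal{T}$ has exactly one sink (vertex with no out-neighbours); (b) every non-sink vertex has exactly one out-neighbour; (c) $\mathcal{T}$ has no directed cycles; (d) $|N^-(v)|\ne 1$ for every vertex $v$, where $N^-(v)$ denotes the set of in-neighbours of $v$. The players $P(\mathcal{T})$ are the sources and the matches are $M(\mathcal{T})=V(\mathcal{T})\setminus P(\mathcal{T})$. For a vertex $u$, $P(u)$ is the set of players $a$ for which there is a directed walk from $a$ to $u$ (length $0$ allowed). For distinct players $a,b$, $x_{a,b}$ denotes the unique match $x$ having in-neighbours $u_a,u_b\in N^-(x)$ with $P(u_a)\cap\{a,b\}=\{a\}$ and $P(u_b)\cap\{a,b\}=\{b\}$ (such a match exists and is unique). A bracket is a function $B:V(\mathcal{T})\to P(\mathcal{T})$ with $B(a)=a$ for every player $a$ and $B(x)\in\{B(u):u\in N^-(x)\}$ for every match $x$. A scoring system is any function $\sigma:M(\mathcal{T})\to\mathbb{R}_{>0}$. For brackets $B,B'$ let $\mathrm{score}_\sigma(B,B')=\sum_{x\in M(\mathcal{T}):\,B(x)=B'(x)}\sigma(x)$. A set of brackets $\mathcal{B}$ is $\sigma$-resolving if for every pair of distinct brackets $B\ne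 B'$ there is $B_i\in\mathcal{B}$ with $\mathrm{score}_\sigma(B_i,B)\ne\mathrm{score}_\sigma(B_i,B')$. *)

theory Defs
  imports Main "HOL.Real"
begin

definition out_nbrs :: "('v \<times> 'v) set \<Rightarrow> 'v \<Rightarrow> 'v set" where
  "out_nbrs E v = {w. (v, w) \<in> E}"

definition in_nbrs :: "('v \<times> 'v) set \<Rightarrow> 'v \<Rightarrow> 'v set" where
  "in_nbrs E v = {u. (u, v) \<in> E}"

definition single_elim_tournament :: "'v set \<Rightarrow> ('v \<times> 'v) set \<Rightarrow> bool" where
  "single_elim_tournament V E \<longleftrightarrow>
     finite V \<and> E \<subseteq> V \<times> V \<and>
     (\<exists>!s. s \<in> V \<and> out_nbrs E s = {}) \<and>
     (\<forall>v\<in>V. out_nbrs E v \<noteq> {} \<longrightarrow> card (out_nbrs E v) = 1) \<and>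
     (\<forall>v. (v, v) \<notin> E\<^sup>+) \<and>
     (\<forall>v\<in>V. card (in_nbrs E v) \<noteq> 1)"

definition players :: "'v set \<Rightarrow> ('v \<times> 'v) set \<Rightarrow> 'v set" where
  "players V E = {v \<in> V. in_nbrs E v = {}}"

definition matches :: "'v set \<Rightarrow> ('v \<times> 'v) set \<Rightarrow> 'v set" where
  "matches V E = V - players V E"

definition feeders :: "'v set \<Rightarrow> ('v \<times> 'v) set \<Rightarrow> 'v \<Rightarrow> 'v set" where
  "feeders V E u = {a \<in> players V E. (a, u) \<in> E\<^sup>*}"

definition meet_match :: "'v set \<Rightarrow> ('v \<times> 'v) set \<Rightarrow> 'v \<Rightarrow> 'v \<Rightarrow> 'v" where
  "meet_match V E a b = (THE x. x \<in> matches V E \<and>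
      (\<exists>ua ub. ua \<in> in_nbrs E x \<and> ub \<in> in_nbrs E x \<and>
         feeders V E ua \<inter> {a, b} = {a} \<and> feeders V E ub \<inter> {a, b} = {b}))"

text \<open>Brackets are functions on V; to make equality of brackets meaningful they
  are taken to be extensional (value undefined outside V).\<close>
definition bracket :: "'v set \<Rightarrow> ('v \<times> 'v) set \<Rightarrow> ('v \<Rightarrow> 'v) \<Rightarrow> bool" where
  "bracket V E B \<longleftrightarrow>
     (\<forall>a\<in>players V E. B a = a) \<and>
     (\<forall>x\<in>matches V E. B x \<in> B ` in_nbrs E x) \<and>
     (\<forall>v. v \<notin> V \<longrightarrow> B v = undefined)"

definition scoring_system :: "'v set \<Rightarrow> ('v \<times> 'v) set \<Rightarrow> ('v \<Rightarrow> real) \<Rightarrow> bool" where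
  "scoring_system V E \<sigma> \<longleftrightarrow> (\<forall>x\<in>matches V E. \<sigma> x > 0)"

definition score :: "'v set \<Rightarrow> ('v \<times> 'v) set \<Rightarrow> ('v \<Rightarrow> real) \<Rightarrow> ('v \<Rightarrow> 'v) \<Rightarrow> ('v \<Rightarrow> 'v) \<Rightarrow> real" where
  "score V E \<sigma> B B' = (\<Sum>x\<in>{x \<in> matches V E. B x = B' x}. \<sigma> x)"

definition resolving :: "'v set \<Rightarrow> ('v \<times> 'v) set \<Rightarrow> ('v \<Rightarrow> real) \<Rightarrow> ('v \<Rightarrow> 'v) set \<Rightarrow> bool" where
  "resolving V E \<sigma> \<B> \<longleftrightarrow>
     (\<forall>B B'. bracket V E B \<longrightarrow> bracket V E B' \<longrightarrow> B \<noteq> B' \<longrightarrow>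
        (\<exists>Bi\<in>\<B>. score V E \<sigma> Bi B \<noteq> score V E \<sigma> Bi B'))"

end

theory Submission
  imports Defs
begin

text \<open>Rank the players with a first and b second, and let every match be won by its best-ranked
  feeder; ranking b first and a second instead gives another bracket. The two brackets differ
  exactly at x_{a,b} and the matches after it, where one has a winning and the other b. A bracket
  agrees with its own winner on every match along that winner's path, so a bracket that picks
  neither a nor b at x_{a,b} picks neither of them later either, and hence scores the same
  against both brackets.\<close>

lemma single_valued_acyclic_in_nbrs_eq:
  assumes sv: "single_valued E" and acyc: "acyclic E"
    and "(p, u) \<in> E\<^sup>*" "(p, w) \<in> E\<^sup>*" "(u, v) \<in> E" "(w, v) \<in> E"
  shows "u = w"
proof -
  have "x = y" if "(x, y) \<in> E\<^sup>*" "(x, v) \<in> E" "(y, v) \<in> E" for x y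
  proof (rule ccontr)
    assume "x \<noteq> y"
    with that(1) obtain z where "(x, z) \<in> E" "(z, y) \<in> E\<^sup>*"
      by (meson converse_rtranclE)
    with that(2) sv have "(v, y) \<in> E\<^sup>*"
      by (metis single_valuedD)
    with that(3) have "(v, v) \<in> E\<^sup>+"
      by (meson rtrancl_into_trancl1)
    with acyc show False
      by (simp add: acyclic_def)
  qed
  with single_valued_confluent[OF sv assms(3,4)] assms(5,6) show ?thesis
    by metis
qed

lemma score_eq_if_disagreements_missed:
  assumes "\<forall>x\<in>matches V E. B x \<noteq> B' x \<longrightarrow> Bi x \<notin> {B x, B' x}"
  shows "score V E \<sigma> Bi B = score V E \<sigma> Bi B'"
proof -
  have "{x \<in> matches V E. Bi x = B x} = {x \<in> matches V E. Bi x = B' x}"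
    using assms by auto
  then show ?thesis
    by (simp add: score_def)
qed

definition top_two_rank :: "('v \<Rightarrow> nat) \<Rightarrow> 'v \<Rightarrow> 'v \<Rightarrow> 'v \<Rightarrow> nat" where
  "top_two_rank f x y p = (if p = x then 0 else if p = y then 1 else f p + 2)"

lemma inj_on_top_two_rank: "inj_on f A \<Longrightarrow> inj_on (top_two_rank f x y) A"
  by (auto simp: top_two_rank_def inj_on_def)

locale single_elim =
  fixes V :: "'v set" and E :: "('v \<times> 'v) set"
  assumes tournament: "single_elim_tournament V E"
begin

lemma finite_V: "finite V"
  and edges_subset: "E \<subseteq> V \<times> V"
  and acyclic_E: "acyclic E"
  using tournament by (auto simp: single_elim_tournament_def acyclic_def)

lemma single_valued_E: "single_valued E"
proof (rule single_valuedI)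
  fix u v w
  assume uv: "(u, v) \<in> E" and uw: "(u, w) \<in> E"
  then have "u \<in> V" "out_nbrs E u \<noteq> {}"
    using edges_subset by (auto simp: out_nbrs_def)
  then have "card (out_nbrs E u) = 1"
    using tournament by (simp add: single_elim_tournament_def)
  then obtain z where "out_nbrs E u = {z}"
    by (rule card_1_singletonE)
  with uv uw show "v = w"
    unfolding out_nbrs_def by (metis mem_Collect_eq singletonD)
qed

lemma wf_E: "wf E"
  and wf_converse_E: "wf (E\<inverse>)"
  using finite_subset[OF edges_subset] finite_V acyclic_E
  by (auto intro: finite_acyclic_wf finite_acyclic_wf_converse)

lemma players_subset: "players V E \<subseteq> V"
  by (auto simp: players_def)

lemma no_edge_into_player: "p \<in> players V E \<Longrightarrow> (u, p) \<notin> E"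
  by (auto simp: players_def in_nbrs_def)

lemma rtrancl_into_player: "p \<in> players V E \<Longrightarrow> (q, p) \<in> E\<^sup>* \<Longrightarrow> q = p"
  by (metis no_edge_into_player rtranclE)

lemma in_edge_imp_match: "(u, x) \<in> E \<Longrightarrow> x \<in> matches V E"
  using edges_subset no_edge_into_player by (auto simp: matches_def)

lemma feeders_subset: "feeders V E v \<subseteq> players V E"
  by (auto simp: feeders_def)

lemma finite_feeders: "finite (feeders V E v)"
  using feeders_subset players_subset finite_V by (meson finite_subset)

lemma feeders_player: "p \<in> players V E \<Longrightarrow> feeders V E p = {p}"
  using rtrancl_into_player by (auto simp: feeders_def)

lemma feeders_mono: "(u, v) \<in> E \<Longrightarrow> feeders V E u \<subseteq> feeders V E v"
  by (auto simp: feeders_def)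

lemma feeders_nonempty: "v \<in> V \<Longrightarrow> feeders V E v \<noteq> {}"
proof (induction v rule: wf_induct[OF wf_E])
  case (1 v)
  show ?case
  proof (cases "in_nbrs E v = {}")
    case True
    with 1 have "v \<in> players V E"
      by (simp add: players_def)
    then show ?thesis
      by (simp add: feeders_player)
  next
    case False
    then obtain u where u: "(u, v) \<in> E"
      by (auto simp: in_nbrs_def)
    with 1 edges_subset have "feeders V E u \<noteq> {}"
      by blast
    with feeders_mono[OF u] show ?thesis
      by blast
  qed
qed

lemma feeders_match_in_nbr:
  assumes "x \<in> matches V E" "p \<in> feeders V E x"
  obtains u where "(u, x) \<in> E" "p \<in> feeders V E u"
proof -
  from assms have "(p, x) \<in> E\<^sup>+"
    by (auto simp: matches_def feeders_def rtrancl_eq_or_trancl)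
  then obtain u where "(p, u) \<in> E\<^sup>*" "(u, x) \<in> E"
    by (meson tranclD2)
  with assms(2) that show ?thesis
    by (auto simp: feeders_def)
qed

lemma bracket_in_feeders:
  assumes "bracket V E B"
  shows "v \<in> V \<Longrightarrow> B v \<in> feeders V E v"
proof (induction v rule: wf_induct[OF wf_E])
  case (1 v)
  show ?case
  proof (cases "v \<in> players V E")
    case True
    with assms show ?thesis
      by (simp add: feeders_player bracket_def)
  next
    case False
    with 1 assms have "B v \<in> B ` in_nbrs E v"
      by (simp add: bracket_def matches_def)
    then obtain u where u: "(u, v) \<in> E" "B v = B u"
      by (auto simp: in_nbrs_def)
    with 1 edges_subset have "B u \<in> feeders V E u"
      by blast
    with u feeders_mono show ?thesis
      by auto
  qed
qed

lemma bracket_eq_at_in_nbr: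
  assumes B: "bracket V E B" and uv: "(u, v) \<in> E" and "(B v, u) \<in> E\<^sup>*"
  shows "B u = B v"
proof -
  from B in_edge_imp_match[OF uv] obtain u' where u': "(u', v) \<in> E" "B v = B u'"
    by (auto simp: bracket_def in_nbrs_def)
  with bracket_in_feeders[OF B] edges_subset have "(B v, u') \<in> E\<^sup>*"
    by (auto simp: feeders_def)
  with single_valued_acyclic_in_nbrs_eq[OF single_valued_E acyclic_E] assms(3) uv u'(1)
  have "u = u'"
    by blast
  with u' show ?thesis
    by simp
qed

lemma bracket_winner_on_path:
  assumes B: "bracket V E B" and "(w, v) \<in> E\<^sup>*" "(B v, w) \<in> E\<^sup>*"
  shows "B w = B v"
  using assms(2,3)
proof (induction rule: converse_rtrancl_induct)
  case base
  then show ?case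
    by simp
next
  case (step y z)
  then have "B z = B v"
    by (meson rtrancl.rtrancl_into_rtrancl)
  with step bracket_eq_at_in_nbr[OF B step(1)] show ?case
    by metis
qed

lemma bracket_eliminated_never_wins:
  assumes "bracket V E B" "(w, v) \<in> E\<^sup>*" "(p, w) \<in> E\<^sup>*" "B w \<noteq> p"
  shows "B v \<noteq> p"
  using bracket_winner_on_path[OF assms(1,2)] assms(3,4) by blast

definition rank_bracket :: "('v \<Rightarrow> 'a::linorder) \<Rightarrow> 'v \<Rightarrow> 'v" where
  "rank_bracket r v = (if v \<in> V then arg_min_on r (feeders V E v) else undefined)"

lemma rank_bracket_eqI:
  assumes "inj_on r (players V E)" "v \<in> V"
    and "p \<in> feeders V E v" "\<forall>q\<in>feeders V E v. r p \<le> r q"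
  shows "rank_bracket r v = p"
  using assms inj_on_subset[OF assms(1) feeders_subset]
  by (simp add: rank_bracket_def arg_min_on_def arg_min_inj_eq)

lemma rank_bracket_cong:
  "\<forall>q\<in>feeders V E v. r q = r' q \<Longrightarrow> rank_bracket r v = rank_bracket r' v"
  unfolding rank_bracket_def arg_min_on_def arg_min_def is_arg_min_def
  by (auto intro!: arg_cong[where f = Eps])

lemma bracket_rank_bracket:
  assumes inj: "inj_on r (players V E)"
  shows "bracket V E (rank_bracket r)"
  unfolding bracket_def
proof (intro conjI ballI allI impI)
  fix p
  assume "p \<in> players V E"
  with players_subset show "rank_bracket r p = p"
    by (intro rank_bracket_eqI[OF inj]) (auto simp: feeders_player)
next
  fix x
  assume x: "x \<in> matches V E"
  then have "x \<in> V"
    by (simp add: matches_def)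
  let ?p = "rank_bracket r x"
  have p_in: "?p \<in> feeders V E x" and p_least: "\<forall>q\<in>feeders V E x. r ?p \<le> r q"
    using \<open>x \<in> V\<close> finite_feeders feeders_nonempty
    by (simp_all add: rank_bracket_def arg_min_if_finite(1) arg_min_least)
  obtain u where u: "(u, x) \<in> E" "?p \<in> feeders V E u"
    using feeders_match_in_nbr[OF x p_in] .
  with edges_subset p_least feeders_mono[OF u(1)] have "rank_bracket r u = ?p"
    by (intro rank_bracket_eqI[OF inj]) auto
  with u(1) show "?p \<in> rank_bracket r ` in_nbrs E x"
    unfolding in_nbrs_def by (metis (mono_tags) image_eqI mem_Collect_eq)
next
  fix v
  assume "v \<notin> V"
  then show "rank_bracket r v = undefined"
    by (simp add: rank_bracket_def)
qed

lemma rank_bracket_top_two_first: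
  assumes "inj_on f (players V E)" "v \<in> V" "x \<in> feeders V E v"
  shows "rank_bracket (top_two_rank f x y) v = x"
  using assms by (intro rank_bracket_eqI inj_on_top_two_rank) (auto simp: top_two_rank_def)

lemma rank_bracket_top_two_second:
  assumes "inj_on f (players V E)" "v \<in> V" "x \<notin> feeders V E v" "y \<in> feeders V E v"
  shows "rank_bracket (top_two_rank f x y) v = y"
  using assms by (intro rank_bracket_eqI inj_on_top_two_rank) (auto simp: top_two_rank_def)

lemma rank_bracket_top_two_swap:
  assumes "inj_on f (players V E)" "v \<in> V" "x \<notin> feeders V E v \<or> y \<notin> feeders V E v"
  shows "rank_bracket (top_two_rank f x y) v = rank_bracket (top_two_rank f y x) v"
proof -
  consider "x \<in> feeders V E v" | "y \<in> feeders V E v" | "x \<notin> feeders V E v" "y \<notin> feeders V E v"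
    by blast
  then show ?thesis
  proof cases
    case 3
    then have "\<forall>q\<in>feeders V E v. top_two_rank f x y q = top_two_rank f y x q"
      by (auto simp: top_two_rank_def)
    then show ?thesis
      by (rule rank_bracket_cong)
  qed (use assms rank_bracket_top_two_first rank_bracket_top_two_second in metis)+
qed

lemma reaches_sink: "\<exists>s. \<forall>v\<in>V. (v, s) \<in> E\<^sup>*"
proof -
  obtain s where sink_unique: "\<And>t. t \<in> V \<Longrightarrow> out_nbrs E t = {} \<Longrightarrow> t = s"
    using tournament unfolding single_elim_tournament_def by metis
  have "v \<in> V \<Longrightarrow> (v, s) \<in> E\<^sup>*" for v
  proof (induction v rule: wf_induct[OF wf_converse_E])
    case (1 v)
    show ?case
    proof (cases "out_nbrs E v = {}")
      case True
      with 1 sink_unique show ?thesis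
        by simp
    next
      case False
      then obtain w where w: "(v, w) \<in> E"
        by (auto simp: out_nbrs_def)
      with 1 edges_subset have "(w, s) \<in> E\<^sup>*"
        by blast
      with w show ?thesis
        by (meson converse_rtrancl_into_rtrancl)
    qed
  qed
  then show ?thesis
    by blast
qed

lemma least_common_descendant:
  assumes "a \<in> V" "b \<in> V"
  obtains m where "(a, m) \<in> E\<^sup>*" "(b, m) \<in> E\<^sup>*"
    "\<And>v. (a, v) \<in> E\<^sup>* \<Longrightarrow> (b, v) \<in> E\<^sup>* \<Longrightarrow> (m, v) \<in> E\<^sup>*"
proof -
  define D where "D = {v. (a, v) \<in> E\<^sup>* \<and> (b, v) \<in> E\<^sup>*}"
  from reaches_sink assms have "D \<noteq> {}"
    by (auto simp: D_def)
  then obtain m where "m \<in> D" and m_min: "\<And>y. (y, m) \<in> E\<^sup>+ \<Longrightarrow> y \<notin> D"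
    using wf_trancl[OF wf_E] unfolding wf_eq_minimal by blast
  have "(m, v) \<in> E\<^sup>*" if "v \<in> D" for v
  proof -
    from \<open>m \<in> D\<close> that have "(a, m) \<in> E\<^sup>*" "(a, v) \<in> E\<^sup>*"
      by (simp_all add: D_def)
    then have "(m, v) \<in> E\<^sup>* \<or> (v, m) \<in> E\<^sup>*"
      by (rule single_valued_confluent[OF single_valued_E])
    with m_min that show ?thesis
      by (auto simp: rtrancl_eq_or_trancl)
  qed
  with \<open>m \<in> D\<close> that show ?thesis
    by (auto simp: D_def)
qed

lemma in_nbr_separating_at_least_common_descendant:
  assumes p: "p \<in> players V E" and "p \<noteq> q"
    and pm: "(p, m) \<in> E\<^sup>*" and qm: "(q, m) \<in> E\<^sup>*"
    and m_least: "\<And>v. (p, v) \<in> E\<^sup>* \<Longrightarrow> (q, v) \<in> E\<^sup>* \<Longrightarrow> (m, v) \<in> E\<^sup>*"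
  obtains u where "(u, m) \<in> E" "(p, u) \<in> E\<^sup>*" "(q, u) \<notin> E\<^sup>*"
proof -
  have "p \<noteq> m"
    using rtrancl_into_player[OF p] qm \<open>p \<noteq> q\<close> by blast
  with pm have "(p, m) \<in> E\<^sup>+"
    by (simp add: rtrancl_eq_or_trancl)
  then obtain u where pu: "(p, u) \<in> E\<^sup>*" and um: "(u, m) \<in> E"
    by (meson tranclD2)
  have "(q, u) \<notin> E\<^sup>*"
  proof
    assume "(q, u) \<in> E\<^sup>*"
    with pu have "(m, u) \<in> E\<^sup>*"
      by (rule m_least)
    with um acyclic_E show False
      by (meson acyclic_def rtrancl_into_trancl2)
  qed
  with pu um that show ?thesis
    by blast
qed

lemma common_descendant_eq_if_in_nbr_avoids:
  assumes "(m, x) \<in> E\<^sup>*" and ux: "(u, x) \<in> E" and "(a, u) \<in> E\<^sup>*"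
    and "(a, m) \<in> E\<^sup>*" "(b, m) \<in> E\<^sup>*" "(b, u) \<notin> E\<^sup>*"
  shows "x = m"
proof -
  from assms(3,4) have "(u, m) \<in> E\<^sup>* \<or> (m, u) \<in> E\<^sup>*"
    by (rule single_valued_confluent[OF single_valued_E])
  moreover from assms(5,6) have "(m, u) \<notin> E\<^sup>*" "u \<noteq> m"
    by (auto dest: rtrancl_trans)
  ultimately have "(u, m) \<in> E\<^sup>+"
    by (simp add: rtrancl_eq_or_trancl)
  then obtain y where "(u, y) \<in> E" "(y, m) \<in> E\<^sup>*"
    by (meson tranclD)
  with ux single_valued_E have "(x, m) \<in> E\<^sup>*"
    by (metis single_valuedD)
  with assms(1) acyclic_E show "x = m"
    by (meson acyclic_impl_antisym_rtrancl antisymD)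
qed

lemma meet_match_eqI:
  assumes a: "a \<in> players V E" and b: "b \<in> players V E" and "a \<noteq> b"
    and am: "(a, m) \<in> E\<^sup>*" and bm: "(b, m) \<in> E\<^sup>*"
    and m_least: "\<And>v. (a, v) \<in> E\<^sup>* \<Longrightarrow> (b, v) \<in> E\<^sup>* \<Longrightarrow> (m, v) \<in> E\<^sup>*"
  shows "meet_match V E a b = m"
proof -
  let ?P = "\<lambda>x. x \<in> matches V E \<and>
      (\<exists>ua ub. ua \<in> in_nbrs E x \<and> ub \<in> in_nbrs E x \<and>
         feeders V E ua \<inter> {a, b} = {a} \<and> feeders V E ub \<inter> {a, b} = {b})"
  obtain ua where "(ua, m) \<in> E" "(a, ua) \<in> E\<^sup>*" "(b, ua) \<notin> E\<^sup>*"
    using in_nbr_separating_at_least_common_descendant[OF a \<open>a \<noteq> b\<close> am bm m_least] .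
  moreover obtain ub where "(ub, m) \<in> E" "(b, ub) \<in> E\<^sup>*" "(a, ub) \<notin> E\<^sup>*"
    using in_nbr_separating_at_least_common_descendant[OF b \<open>a \<noteq> b\<close>[symmetric] bm am]
      m_least by blast
  ultimately have "?P m"
    using a b by (auto simp: in_nbrs_def feeders_def intro: in_edge_imp_match)
  moreover have "x = m" if "?P x" for x
  proof -
    from that obtain ua ub where ua: "(ua, x) \<in> E" and ub: "(ub, x) \<in> E"
      and fa: "feeders V E ua \<inter> {a, b} = {a}" and fb: "feeders V E ub \<inter> {a, b} = {b}"
      by (auto simp: in_nbrs_def)
    from fa fb \<open>a \<noteq> b\<close> have "a \<in> feeders V E ua" "b \<notin> feeders V E ua"
      "b \<in> feeders V E ub"
      by auto
    with b have a_ua: "(a, ua) \<in> E\<^sup>*" and b_ua: "(b, ua) \<notin> E\<^sup>*" and b_ub: "(b, ub) \<in> E\<^sup>*"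
      by (auto simp: feeders_def)
    from a_ua ua b_ub ub have "(m, x) \<in> E\<^sup>*"
      by (meson m_least rtrancl.rtrancl_into_rtrancl)
    then show "x = m"
      using ua a_ua am bm b_ua by (rule common_descendant_eq_if_in_nbr_avoids)
  qed
  ultimately show ?thesis
    unfolding meet_match_def by (rule the_equality)
qed

lemma meet_match:
  assumes "a \<in> players V E" "b \<in> players V E" "a \<noteq> b"
  shows meet_match_in_matches: "meet_match V E a b \<in> matches V E"
    and rtrancl_meet_match_iff:
      "(meet_match V E a b, v) \<in> E\<^sup>* \<longleftrightarrow> (a, v) \<in> E\<^sup>* \<and> (b, v) \<in> E\<^sup>*"
proof -
  from assms players_subset have "a \<in> V" "b \<in> V"
    by auto
  obtain m where m: "(a, m) \<in> E\<^sup>*" "(b, m) \<in> E\<^sup>*"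
    and m_least: "\<And>v. (a, v) \<in> E\<^sup>* \<Longrightarrow> (b, v) \<in> E\<^sup>* \<Longrightarrow> (m, v) \<in> E\<^sup>*"
    using least_common_descendant[OF \<open>a \<in> V\<close> \<open>b \<in> V\<close>] by metis
  with assms have eq: "meet_match V E a b = m"
    by (rule meet_match_eqI)
  from rtrancl_into_player[OF assms(1)] m(2) assms(3) have "a \<noteq> m"
    by blast
  with m(1) have "(a, m) \<in> E\<^sup>+"
    by (simp add: rtrancl_eq_or_trancl)
  then show "meet_match V E a b \<in> matches V E"
    unfolding eq by (meson in_edge_imp_match tranclD2)
  from m m_least show "(meet_match V E a b, v) \<in> E\<^sup>* \<longleftrightarrow> (a, v) \<in> E\<^sup>* \<and> (b, v) \<in> E\<^sup>*"
    unfolding eq by (meson rtrancl_trans)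
qed

lemma brackets_differing_only_after_meet_match:
  assumes a: "a \<in> players V E" and b: "b \<in> players V E" and "a \<noteq> b"
  obtains B B' where "bracket V E B" "bracket V E B'" "B \<noteq> B'"
    "\<forall>x. B x \<noteq> B' x \<longrightarrow> B x \<in> {a, b} \<and> B' x \<in> {a, b} \<and> (meet_match V E a b, x) \<in> E\<^sup>*"
proof -
  from finite_V players_subset have "finite (players V E)"
    by (rule finite_subset[rotated])
  then obtain f :: "'v \<Rightarrow> nat" where f: "inj_on f (players V E)"
    using finite_imp_inj_to_nat_seg by blast
  define B where "B = rank_bracket (top_two_rank f a b)"
  define B' where "B' = rank_bracket (top_two_rank f b a)"
  have "bracket V E B" "bracket V E B'"
    unfolding B_def B'_def using f by (simp_all add: bracket_rank_bracket inj_on_top_two_rank)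
  moreover have "B x \<in> {a, b} \<and> B' x \<in> {a, b} \<and> (meet_match V E a b, x) \<in> E\<^sup>*"
    if "B x \<noteq> B' x" for x
  proof -
    from that have "x \<in> V"
      unfolding B_def B'_def rank_bracket_def by (cases "x \<in> V") simp_all
    with that f have "a \<in> feeders V E x" "b \<in> feeders V E x"
      unfolding B_def B'_def using rank_bracket_top_two_swap by blast+
    with f \<open>x \<in> V\<close> a b show ?thesis
      unfolding B_def B'_def
      by (simp add: rank_bracket_top_two_first rtrancl_meet_match_iff[OF assms] feeders_def)
  qed
  moreover have "B \<noteq> B'"
  proof -
    let ?m = "meet_match V E a b"
    have "?m \<in> V" "a \<in> feeders V E ?m" "b \<in> feeders V E ?m"
      using meet_match_in_matches[OF assms] rtrancl_meet_match_iff[OF assms, of ?m] a b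
      by (auto simp: matches_def feeders_def)
    with f \<open>a \<noteq> b\<close> have "B ?m \<noteq> B' ?m"
      by (simp add: B_def B'_def rank_bracket_top_two_first)
    then show ?thesis
      by force
  qed
  ultimately show ?thesis
    using that by blast
qed

end

theorem proposition4p3:
  fixes V :: "'v set" and E :: "('v \<times> 'v) set" and \<B> :: "('v \<Rightarrow> 'v) set"
  assumes "single_elim_tournament V E"
    and "\<forall>B\<in>\<B>. bracket V E B"
    and "a \<in> players V E" and "b \<in> players V E" and "a \<noteq> b"
    and "\<forall>Bi\<in>\<B>. Bi (meet_match V E a b) \<notin> {a, b}"
  shows "\<forall>\<sigma>. scoring_system V E \<sigma> \<longrightarrow> \<not> resolving V E \<sigma> \<B>"
proof (intro allI impI notI)
  fix \<sigma>
  assume resolving: "resolving V E \<sigma> \<B>"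
  interpret single_elim V E
    by (rule single_elim.intro) (fact assms(1))
  let ?m = "meet_match V E a b"
  obtain B B' where brackets: "bracket V E B" "bracket V E B'" "B \<noteq> B'"
    and differ: "\<forall>x. B x \<noteq> B' x \<longrightarrow> B x \<in> {a, b} \<and> B' x \<in> {a, b} \<and> (?m, x) \<in> E\<^sup>*"
    by (rule brackets_differing_only_after_meet_match[OF assms(3-5)])
  from resolving brackets obtain Bi where Bi: "Bi \<in> \<B>" "score V E \<sigma> Bi B \<noteq> score V E \<sigma> Bi B'"
    unfolding resolving_def by blast
  have "Bi x \<noteq> p" if "(?m, x) \<in> E\<^sup>*" "p \<in> {a, b}" for x p
  proof (rule bracket_eliminated_never_wins[OF _ that(1)])
    show "bracket V E Bi" "Bi ?m \<noteq> p"
      using Bi(1) assms(2,6) that(2) by auto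
    show "(p, ?m) \<in> E\<^sup>*"
      using rtrancl_meet_match_iff[OF assms(3-5), of ?m] that(2) by auto
  qed
  with differ have "\<forall>x\<in>matches V E. B x \<noteq> B' x \<longrightarrow> Bi x \<notin> {B x, B' x}"
    by auto
  then have "score V E \<sigma> Bi B = score V E \<sigma> Bi B'"
    by (rule score_eq_if_disagreements_missed)
  with Bi(2) show False
    by contradiction
qed

end
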